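(* Let $\Sigma$ be a ranked alphabet, $B$ a strong bimonoid and $\mathcal{A}=(Q,\delta,F)$ a $(\Sigma,B)$-wta. The following are equivalent: (i) $\mathcal{N}(\mathcal{A})$ is finite; (ii) for each final variant $\mathcal{B}$ of $\mathcal{A}$, the Nerode algebra $\mathcal{N}(\mathcal{B})$ is finite and $[\![\mathcal{B}]\!]^{\mathrm{init}}$ is i-recognizable by a final variant of $\mathrm{rel}(\mathcal{N}(\mathcal{A}))$; (iii) each $r\in[\![\mathrm{FV}(\mathcal{A})]\!]^{\mathrm{init}}$ is i-recognizable by some crisp-deterministic $(\Sigma,B)$-wta.
   Context: Ranked alphabet $\Sigma$ ($\Sigma^{(0)}\ne\emptyset$), trees $T_\Sigma$; strong bimonoid $(B,\oplus,\otimes,\mathbb{0},\mathbb{1})$ (commutative monoid $(B,\oplus,\mathbb{0})$, monoid $(B,\otimes,\mathbb{1})$, $\mathbb{0}\ne\mathbb{1}$, $\mathbb{0}$ absorbing, no distributivity). $(\Sigma,B)$-wta $\mathcal{A}=(Q,\delta,F)$: $Q$ finite nonempty, $\delta_k:Q^k\times\Sigma^{(k)}\times Q\to B$, $F:Q\to B$. Vector algebra $\mathrm{V}(\mathcal{A})=(B^Q,\delta_{\mathcal{A}})$, $\delta_{\mathcal{A}}(\sigma)(v_1,\dots,v_k)_q=\bigoplus_{q_1,\dots,q_k}\big(\bigotimes_{i=1}^k(v_i)_{q_i}\big)\otimes\delta_k(q_1\dots q_k,\sigma,q)$; $h_{\mathrm{V}(\mathcal{A})}:T_\Sigma\to B^Q$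 the unique homomorphism; $[\![\mathcal{A}]\!]^{\mathrm{init}}(\xi)=\bigoplus_q h_{\mathrm{V}(\mathcal{A})}(\xi)_q\otimes F_q$. A weighted tree language $r:T_\Sigma\to B$ is i-recognizable by $\mathcal{A}$ if $r=[\![\mathcal{A}]\!]^{\mathrm{init}}$. Crisp-deterministic: for all $k,\sigma\in\Sigma^{(k)},q_1,\dots,q_k$ a unique $q$ with $\delta_k(q_1\dots q_k,\sigma,q)=\mathbb{1}$, all other such values $\mathbb{0}$. A final variant of $\mathcal{A}$ is any wta $(Q,\delta,F')$ with $F':Q\to B$ arbitrary; $\mathrm{FV}(\mathcal{A})$ is the set of final variants, $[\![\mathrm{FV}(\mathcal{A})]\!]^{\mathrm{init}}=\{[\![\mathcal{B}]\!]^{\mathrm{init}}\mid\mathcal{B}\in\mathrm{FV}(\mathcal{A})\}$. Nerode algebra $\mathcal{N}(\mathcal{A})=(Q_{\mathcal{N}},\theta_{\mathcal{N}},F_{\mathcal{N}})$: $(Q_{\mathcal{N}},\theta_{\mathcal{N}})$ the smallest subalgebra of $\mathrm{V}(\mathcal{A})$ (so $Q_{\mathcal{N}}=\mathrm{im}(h_{\mathrm{V}(\mathcal{A})})$), $(F_{\mathcal{N}})_v=\bigoplus_q v_q\otimes F_q$; finite if $Q_{\mathcal{N}}$ is finite. For a finite $(\Sigma,B)$-algebra $(P,\theta,G)$ ($(P,\theta)$ a $\Sigma$-algebra, $G:P\to B$), $\mathrm{rel}(P,\theta,G)$ is the crisp-deterministic wta $(P,\delta',G)$ with $\delta'_k(p_1\dots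 p_k,\sigma,p)=\mathbb{1}$ iff $\theta(\sigma)(p_1,\dots,p_k)=p$, and $\mathbb{0}$ otherwise. *)

theory Defs
  imports Main
begin

datatype 'f tree = Node 'f "'f tree list"

fun wf_tree :: "'f set \<Rightarrow> ('f \<Rightarrow> nat) \<Rightarrow> 'f tree \<Rightarrow> bool" where
  "wf_tree Sig rk (Node f ts) =
     (f \<in> Sig \<and> length ts = rk f \<and> (\<forall>t\<in>set ts. wf_tree Sig rk t))"

definition trees :: "'f set \<Rightarrow> ('f \<Rightarrow> nat) \<Rightarrow> 'f tree set" where
  "trees Sig rk = {t. wf_tree Sig rk t}"

definition ranked_alphabet :: "'f set \<Rightarrow> ('f \<Rightarrow> nat) \<Rightarrow> bool" where
  "ranked_alphabet Sig rk \<longleftrightarrow> finite Sig \<and> (\<exists>f\<in>Sig. rk f = 0)"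

text \<open>Strong bimonoid: the type class combination
  comm_monoid_add (commutative monoid (+,0)), monoid_mult (monoid ( *,1)),
  mult_zero (0 absorbing), zero_neq_one; no distributivity.\<close>

text \<open>A wta is given by a state set Q (finite, nonempty), transition weights
  delta qs f q (qs a list of length rk f) and final weights F.\<close>

definition is_wta :: "'s set \<Rightarrow> bool" where
  "is_wta Q \<longleftrightarrow> finite Q \<and> Q \<noteq> {}"

definition tuples :: "'s set \<Rightarrow> nat \<Rightarrow> 's list set" where
  "tuples Q k = {qs. length qs = k \<and> set qs \<subseteq> Q}"

text \<open>Operation of the vector algebra V(A) on B^Q (vectors are functions 's => 'b,
  taken to be 0 outside Q).\<close>

definition vstep :: "'s set \<Rightarrow> ('s list \<Rightarrow> 'f \<Rightarrow> 's \<Rightarrow> 'b::{comm_monoid_add,monoid_mult,mult_zero,zero_neq_one})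
    \<Rightarrow> 'f \<Rightarrow> ('s \<Rightarrow> 'b) list \<Rightarrow> ('s \<Rightarrow> 'b)" where
  "vstep Q \<delta> f vs = (\<lambda>q. if q \<in> Q then
      (\<Sum>qs\<in>tuples Q (length vs).
         prod_list (map (\<lambda>i. (vs ! i) (qs ! i)) [0..<length vs]) * \<delta> qs f q)
     else 0)"

fun hV :: "'s set \<Rightarrow> ('s list \<Rightarrow> 'f \<Rightarrow> 's \<Rightarrow> 'b::{comm_monoid_add,monoid_mult,mult_zero,zero_neq_one})
    \<Rightarrow> 'f tree \<Rightarrow> ('s \<Rightarrow> 'b)" where
  "hV Q \<delta> (Node f ts) = vstep Q \<delta> f (map (hV Q \<delta>) ts)"

definition init_sem :: "'s set \<Rightarrow> ('s list \<Rightarrow> 'f \<Rightarrow> 's \<Rightarrow> 'b::{comm_monoid_add,monoid_mult,mult_zero,zero_neq_one})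
    \<Rightarrow> ('s \<Rightarrow> 'b) \<Rightarrow> 'f tree \<Rightarrow> 'b" where
  "init_sem Q \<delta> F t = (\<Sum>q\<in>Q. hV Q \<delta> t q * F q)"

definition i_recognizable_by :: "'f set \<Rightarrow> ('f \<Rightarrow> nat) \<Rightarrow> ('f tree \<Rightarrow> 'b) \<Rightarrow> 's set
    \<Rightarrow> ('s list \<Rightarrow> 'f \<Rightarrow> 's \<Rightarrow> 'b::{comm_monoid_add,monoid_mult,mult_zero,zero_neq_one})
    \<Rightarrow> ('s \<Rightarrow> 'b) \<Rightarrow> bool" where
  "i_recognizable_by Sig rk r Q \<delta> F \<longleftrightarrow> (\<forall>t\<in>trees Sig rk. r t = init_sem Q \<delta> F t)"

definition crisp_deterministic :: "'f set \<Rightarrow> ('f \<Rightarrow> nat) \<Rightarrow> 's set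
    \<Rightarrow> ('s list \<Rightarrow> 'f \<Rightarrow> 's \<Rightarrow> 'b::{comm_monoid_add,monoid_mult,mult_zero,zero_neq_one}) \<Rightarrow> bool" where
  "crisp_deterministic Sig rk Q \<delta> \<longleftrightarrow>
     (\<forall>f\<in>Sig. \<forall>qs\<in>tuples Q (rk f).
        \<exists>!q. q \<in> Q \<and> \<delta> qs f q = 1 \<and> (\<forall>q'\<in>Q. q' \<noteq> q \<longrightarrow> \<delta> qs f q' = 0))"

definition nerode_states :: "'f set \<Rightarrow> ('f \<Rightarrow> nat) \<Rightarrow> 's set
    \<Rightarrow> ('s list \<Rightarrow> 'f \<Rightarrow> 's \<Rightarrow> 'b::{comm_monoid_add,monoid_mult,mult_zero,zero_neq_one})
    \<Rightarrow> ('s \<Rightarrow> 'b) set" where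
  "nerode_states Sig rk Q \<delta> = hV Q \<delta> ` trees Sig rk"

definition nerode_op :: "'s set \<Rightarrow> ('s list \<Rightarrow> 'f \<Rightarrow> 's \<Rightarrow> 'b::{comm_monoid_add,monoid_mult,mult_zero,zero_neq_one})
    \<Rightarrow> 'f \<Rightarrow> ('s \<Rightarrow> 'b) list \<Rightarrow> ('s \<Rightarrow> 'b)" where
  "nerode_op Q \<delta> = vstep Q \<delta>"

definition nerode_final :: "'s set \<Rightarrow> ('s \<Rightarrow> 'b::{comm_monoid_add,monoid_mult,mult_zero,zero_neq_one})
    \<Rightarrow> ('s \<Rightarrow> 'b) \<Rightarrow> 'b" where
  "nerode_final Q F v = (\<Sum>q\<in>Q. v q * F q)"

text \<open>rel(P, theta, G): crisp-deterministic wta with states P, transitions from theta,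
  final weights G. We give its transition function.\<close>

definition rel_delta :: "('f \<Rightarrow> 'p list \<Rightarrow> 'p)
    \<Rightarrow> 'p list \<Rightarrow> 'f \<Rightarrow> 'p \<Rightarrow> 'b::{comm_monoid_add,monoid_mult,mult_zero,zero_neq_one}" where
  "rel_delta \<theta> ps f p = (if \<theta> f ps = p then 1 else 0)"

end

theory Submission
  imports Defs "HOL-Library.FuncSet"
begin

text \<open>On every tree a crisp-deterministic wta reaches exactly one state p, its vector
  h(t) is the unit vector at p, and so its semantics is G p. The relabelling
  rel(N(A)) is crisp-deterministic with run t \<mapsto> h_V(A)(t), so with final weights F_N it
  computes each final variant of A; renaming its finitely many states by naturals
  gives (iii). Conversely, a crisp-deterministic wta takes only finitely many values.
  Taking the final variant with the unit vector at q as final weights, every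
  coordinate t \<mapsto> h_V(A)(t)_q has finite range, and since these vectors vanish
  outside Q, N(A) is finite.\<close>

lemma prod_list_eq_zero_if_mem:
  "(0::'b::{monoid_mult,mult_zero}) \<in> set xs \<Longrightarrow> prod_list xs = 0"
  by (induction xs) auto

lemma prod_list_eq_one_if_all_one:
  "(\<forall>x\<in>set xs. x = (1::'b::monoid_mult)) \<Longrightarrow> prod_list xs = 1"
  by (induction xs) auto

lemma finite_tuples: "finite P \<Longrightarrow> finite (tuples P k)"
  unfolding tuples_def using finite_lists_length_eq[of P k] by (simp add: conj_commute)

lemma bij_betw_map_tuples:
  assumes "bij_betw g P S"
  shows "bij_betw (map g) (tuples P k) (tuples S k)"
proof -
  have lists: "inj_on (map g) (lists P)" "map g ` lists P = lists S"
    using bij_lists[OF assms] by (auto simp: bij_betw_def)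
  have "ps \<in> map g ` tuples P k" if "ps \<in> tuples S k" for ps
  proof -
    have "ps \<in> map g ` lists P"
      using that lists(2) by (auto simp: tuples_def)
    then obtain qs where "qs \<in> lists P" "ps = map g qs" by blast
    with that show ?thesis by (auto simp: tuples_def)
  qed
  moreover have "map g ` tuples P k \<subseteq> tuples S k"
    using lists(2) by (auto simp: tuples_def)
  moreover have "tuples P k \<subseteq> lists P" by (auto simp: tuples_def)
  ultimately show ?thesis
    using lists(1) by (auto simp: bij_betw_def intro: inj_on_subset)
qed

definition unit_vec :: "'a \<Rightarrow> 'a \<Rightarrow> 'b::zero_neq_one" where
  "unit_vec p q = (if q = p then 1 else 0)"

lemma prod_list_unit_vecs_nth:
  assumes "length qs = length ps"
  shows "(\<Prod>i\<leftarrow>[0..<length ps]. (map unit_vec ps ! i) (qs ! i)) =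
           (unit_vec ps qs :: 'b::{monoid_mult,mult_zero,zero_neq_one})"
proof -
  have "map (\<lambda>i. (map unit_vec ps ! i) (qs ! i)) [0..<length ps] =
        map (\<lambda>i. unit_vec (ps ! i) (qs ! i) :: 'b) [0..<length ps]"
    by (intro map_cong) auto
  moreover have "(\<Prod>i\<leftarrow>[0..<length ps]. unit_vec (ps ! i) (qs ! i)) = (unit_vec ps qs :: 'b)"
  proof (cases "qs = ps")
    case True
    then show ?thesis by (simp add: unit_vec_def prod_list_eq_one_if_all_one)
  next
    case False
    then obtain i where "i < length ps" "qs ! i \<noteq> ps ! i"
      using assms nth_equalityI by metis
    then have "(0::'b) \<in> set (map (\<lambda>i. unit_vec (ps ! i) (qs ! i)) [0..<length ps])"
      by (force simp: unit_vec_def)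
    then show ?thesis using False by (simp add: unit_vec_def prod_list_eq_zero_if_mem)
  qed
  ultimately show ?thesis by metis
qed

lemma vstep_unit_vecs:
  assumes "finite P" "set ps \<subseteq> P" "q \<in> P"
  shows "vstep P \<delta> f (map unit_vec ps) q = \<delta> ps f q"
proof -
  have "vstep P \<delta> f (map unit_vec ps) q = (\<Sum>qs\<in>tuples P (length ps). unit_vec ps qs * \<delta> qs f q)"
    using assms(3) by (auto simp: vstep_def tuples_def prod_list_unit_vecs_nth intro!: sum.cong)
  also have "\<dots> = (\<Sum>qs\<in>tuples P (length ps). if qs = ps then \<delta> qs f q else 0)"
    by (intro sum.cong) (auto simp: unit_vec_def)
  also have "\<dots> = \<delta> ps f q"
    using assms(2) finite_tuples[OF assms(1)] by (subst sum.delta) (auto simp: tuples_def)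
  finally show ?thesis .
qed

lemma hV_outside_states: "q \<notin> Q \<Longrightarrow> hV Q \<delta> t q = 0"
  by (cases t) (simp add: vstep_def)

lemma init_sem_unit_vec:
  assumes "finite P" "p \<in> P" "hV P \<delta> t = unit_vec p"
  shows "init_sem P \<delta> G t = G p"
proof -
  have "init_sem P \<delta> G t = (\<Sum>q\<in>P. if q = p then G q else 0)"
    unfolding init_sem_def assms(3) by (intro sum.cong) (auto simp: unit_vec_def)
  also have "\<dots> = G p" using assms(1,2) by simp
  finally show ?thesis .
qed

lemma init_sem_unit_vec_final:
  assumes "finite Q" "q \<in> Q"
  shows "init_sem Q \<delta> (unit_vec q) t = hV Q \<delta> t q"
proof -
  have "init_sem Q \<delta> (unit_vec q) t = (\<Sum>q'\<in>Q. if q' = q then hV Q \<delta> t q' else 0)"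
    unfolding init_sem_def by (intro sum.cong) (auto simp: unit_vec_def)
  also have "\<dots> = hV Q \<delta> t q" using assms by simp
  finally show ?thesis .
qed

definition deterministic_run ::
    "'f set \<Rightarrow> ('f \<Rightarrow> nat) \<Rightarrow> 'p set \<Rightarrow> ('p list \<Rightarrow> 'f \<Rightarrow> 'p \<Rightarrow> 'b::zero_neq_one) \<Rightarrow> ('f tree \<Rightarrow> 'p) \<Rightarrow> bool"
  where "deterministic_run Sig rk P \<delta> st \<longleftrightarrow>
    (\<forall>f ts. wf_tree Sig rk (Node f ts) \<longrightarrow> (\<forall>t\<in>set ts. st t \<in> P) \<longrightarrow>
       st (Node f ts) \<in> P \<and> (\<forall>q\<in>P. \<delta> (map st ts) f q = unit_vec (st (Node f ts)) q))"

lemma hV_deterministic_run: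
  assumes "finite P" and run: "deterministic_run Sig rk P \<delta> st"
  shows "wf_tree Sig rk t \<Longrightarrow> st t \<in> P \<and> hV P \<delta> t = unit_vec (st t)"
proof (induction t)
  case (Node f ts)
  then have children: "\<forall>t\<in>set ts. st t \<in> P \<and> hV P \<delta> t = unit_vec (st t)"
    by simp
  then have hV_children: "map (hV P \<delta>) ts = map unit_vec (map st ts)"
    and states: "set (map st ts) \<subseteq> P"
    by auto
  have step: "st (Node f ts) \<in> P" "\<forall>q\<in>P. \<delta> (map st ts) f q = unit_vec (st (Node f ts)) q"
    using run Node.prems children by (auto simp: deterministic_run_def)
  have "hV P \<delta> (Node f ts) q = unit_vec (st (Node f ts)) q" for q
  proof (cases "q \<in> P")
    case True
    then have "hV P \<delta> (Node f ts) q = \<delta> (map st ts) f q"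
      using vstep_unit_vecs[OF assms(1) states] by (simp add: hV_children)
    with True step show ?thesis by simp
  next
    case False
    with step show ?thesis by (auto simp: vstep_def unit_vec_def)
  qed
  with step show ?case by auto
qed

lemma init_sem_deterministic_run:
  assumes "finite P" and "deterministic_run Sig rk P \<delta> st" and "t \<in> trees Sig rk"
  shows "st t \<in> P" and "init_sem P \<delta> G t = G (st t)"
proof -
  have "st t \<in> P \<and> hV P \<delta> t = unit_vec (st t)"
    using hV_deterministic_run[OF assms(1,2)] assms(3) by (auto simp: trees_def)
  then show "st t \<in> P" and "init_sem P \<delta> G t = G (st t)"
    using init_sem_unit_vec[OF assms(1)] by auto
qed

text \<open>The state reached by a crisp-deterministic wta; the choice is unique on well-formed
  trees and arbitrary elsewhere.\<close>

fun crisp_state :: "'p set \<Rightarrow> ('p list \<Rightarrow> 'f \<Rightarrow> 'p \<Rightarrow> 'b::zero_neq_one) \<Rightarrow> 'f tree \<Rightarrow> 'p" where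
  "crisp_state P \<delta> (Node f ts) = (SOME q. q \<in> P \<and> \<delta> (map (crisp_state P \<delta>) ts) f q = 1 \<and>
      (\<forall>q'\<in>P. q' \<noteq> q \<longrightarrow> \<delta> (map (crisp_state P \<delta>) ts) f q' = 0))"

lemma deterministic_run_crisp_state:
  assumes crisp: "crisp_deterministic Sig rk P \<delta>"
  shows "deterministic_run Sig rk P \<delta> (crisp_state P \<delta>)"
  unfolding deterministic_run_def
proof (intro allI impI)
  fix f ts
  let ?run = "crisp_state P \<delta>"
  assume "wf_tree Sig rk (Node f ts)" and "\<forall>t\<in>set ts. ?run t \<in> P"
  then have "f \<in> Sig" and "map ?run ts \<in> tuples P (rk f)"
    by (auto simp: tuples_def)
  from crisp[unfolded crisp_deterministic_def, rule_format, OF this]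
  have "\<exists>q. q \<in> P \<and> \<delta> (map ?run ts) f q = 1 \<and> (\<forall>q'\<in>P. q' \<noteq> q \<longrightarrow> \<delta> (map ?run ts) f q' = 0)"
    by blast
  from someI_ex[OF this]
  show "?run (Node f ts) \<in> P \<and> (\<forall>q\<in>P. \<delta> (map ?run ts) f q = unit_vec (?run (Node f ts)) q)"
    by (auto simp: unit_vec_def)
qed

lemma init_sem_crisp_deterministic_range:
  assumes "finite P" and "crisp_deterministic Sig rk P \<delta>"
  shows "init_sem P \<delta> G ` trees Sig rk \<subseteq> G ` P"
  using init_sem_deterministic_run[OF assms(1) deterministic_run_crisp_state[OF assms(2)]] by blast

definition rename_delta :: "('p \<Rightarrow> 's) \<Rightarrow> ('s list \<Rightarrow> 'f \<Rightarrow> 's \<Rightarrow> 'b) \<Rightarrow> 'p list \<Rightarrow> 'f \<Rightarrow> 'p \<Rightarrow> 'b" where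
  "rename_delta g \<delta> ps f p = \<delta> (map g ps) f (g p)"

lemma hV_rename:
  assumes g: "bij_betw g P S"
  shows "hV P (rename_delta g \<delta>) t q = (if q \<in> P then hV S \<delta> t (g q) else 0)"
proof (induction t arbitrary: q)
  case (Node f ts)
  let ?k = "length ts"
  let ?weight = "\<lambda>ps. (\<Prod>i\<leftarrow>[0..<?k]. (map (hV S \<delta>) ts ! i) (ps ! i)) * \<delta> ps f (g q)"
  have children: "(\<Prod>i\<leftarrow>[0..<?k]. (map (hV P (rename_delta g \<delta>)) ts ! i) (qs ! i)) =
                  (\<Prod>i\<leftarrow>[0..<?k]. (map (hV S \<delta>) ts ! i) (map g qs ! i))"
    if "qs \<in> tuples P ?k" for qs
  proof -
    have "(map (hV P (rename_delta g \<delta>)) ts ! i) (qs ! i) = (map (hV S \<delta>) ts ! i) (map g qs ! i)"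
      if "i < ?k" for i
      using Node.IH[of "ts ! i" "qs ! i"] \<open>qs \<in> tuples P ?k\<close> that
      by (auto simp: tuples_def nth_mem subsetD)
    then show ?thesis by (intro arg_cong[where f = prod_list] map_cong) auto
  qed
  show ?case
  proof (cases "q \<in> P")
    case True
    then have "hV P (rename_delta g \<delta>) (Node f ts) q = (\<Sum>qs\<in>tuples P ?k. ?weight (map g qs))"
      by (auto simp: vstep_def rename_delta_def children intro!: sum.cong)
    also have "\<dots> = (\<Sum>ps\<in>tuples S ?k. ?weight ps)"
      by (rule sum.reindex_bij_betw[OF bij_betw_map_tuples[OF g]])
    also have "\<dots> = hV S \<delta> (Node f ts) (g q)"
      using True g by (auto simp: vstep_def bij_betw_apply)
    finally show ?thesis using True by simp
  next
    case False
    then show ?thesis by (simp add: vstep_def)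
  qed
qed

lemma init_sem_rename:
  assumes g: "bij_betw g P S"
  shows "init_sem P (rename_delta g \<delta>) (G \<circ> g) t = init_sem S \<delta> G t"
proof -
  have "init_sem P (rename_delta g \<delta>) (G \<circ> g) t = (\<Sum>q\<in>P. hV S \<delta> t (g q) * G (g q))"
    by (auto simp: init_sem_def hV_rename[OF g] intro!: sum.cong)
  also have "\<dots> = init_sem S \<delta> G t"
    unfolding init_sem_def by (rule sum.reindex_bij_betw[OF g])
  finally show ?thesis .
qed

lemma crisp_deterministic_rename:
  assumes g: "bij_betw g P S" and crisp: "crisp_deterministic Sig rk S \<delta>"
  shows "crisp_deterministic Sig rk P (rename_delta g \<delta>)"
  unfolding crisp_deterministic_def
proof (intro ballI)
  fix f qs assume f: "f \<in> Sig" and qs: "qs \<in> tuples P (rk f)"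
  let ?target = "\<lambda>x. x \<in> S \<and> \<delta> (map g qs) f x = 1 \<and> (\<forall>x'\<in>S. x' \<noteq> x \<longrightarrow> \<delta> (map g qs) f x' = 0)"
  let ?source = "\<lambda>q. q \<in> P \<and> rename_delta g \<delta> qs f q = 1 \<and>
                     (\<forall>q'\<in>P. q' \<noteq> q \<longrightarrow> rename_delta g \<delta> qs f q' = 0)"
  have "map g qs \<in> tuples S (rk f)"
    using bij_betw_apply[OF bij_betw_map_tuples[OF g] qs] .
  from crisp[unfolded crisp_deterministic_def, rule_format, OF f this]
  obtain p where p: "?target p" and p_unique: "\<And>p'. ?target p' \<Longrightarrow> p' = p"
    by (elim ex1E) blast
  have image: "g ` P = S" and inj: "inj_on g P"
    using g by (auto simp: bij_betw_def)
  have source_iff: "?source q \<longleftrightarrow> q \<in> P \<and> ?target (g q)" for q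
    using image inj by (auto simp: rename_delta_def inj_on_eq_iff)
  show "\<exists>!q. ?source q"
  proof (rule ex1I[of _ "inv_into P g p"])
    have "inv_into P g p \<in> P" "g (inv_into P g p) = p"
      using p image by (auto intro: inv_into_into f_inv_into_f)
    with p show "?source (inv_into P g p)"
      by (subst source_iff) simp
  next
    fix q assume "?source q"
    then have "q \<in> P" "g q = p" using source_iff p_unique by auto
    then show "q = inv_into P g p"
      using inj by (auto simp: inv_into_f_f)
  qed
qed

lemma crisp_deterministic_nat_states:
  assumes "is_wta S" and "crisp_deterministic Sig rk S \<delta>"
    and "i_recognizable_by Sig rk r S \<delta> G"
  shows "\<exists>(P::nat set) \<delta>' G'. is_wta P \<and> crisp_deterministic Sig rk P \<delta>' \<and>
           i_recognizable_by Sig rk r P \<delta>' G'"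
proof -
  obtain g where g: "bij_betw g {0..<card S} S"
    using ex_bij_betw_nat_finite assms(1) by (auto simp: is_wta_def)
  have "is_wta {0..<card S}"
    using assms(1) by (auto simp: is_wta_def card_gt_0_iff)
  moreover have "crisp_deterministic Sig rk {0..<card S} (rename_delta g \<delta>)"
    using crisp_deterministic_rename[OF g assms(2)] .
  moreover have "i_recognizable_by Sig rk r {0..<card S} (rename_delta g \<delta>) (G \<circ> g)"
    using assms(3) by (simp add: i_recognizable_by_def init_sem_rename[OF g])
  ultimately show ?thesis by blast
qed

lemma hV_in_nerode_states: "t \<in> trees Sig rk \<Longrightarrow> hV Q \<delta> t \<in> nerode_states Sig rk Q \<delta>"
  by (simp add: nerode_states_def)

lemma nerode_op_closed:
  assumes "f \<in> Sig" "ps \<in> tuples (nerode_states Sig rk Q \<delta>) (rk f)"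
  shows "nerode_op Q \<delta> f ps \<in> nerode_states Sig rk Q \<delta>"
proof -
  have "\<forall>p\<in>set ps. \<exists>t. t \<in> trees Sig rk \<and> p = hV Q \<delta> t"
    using assms(2) by (auto simp: tuples_def nerode_states_def)
  then obtain pick where pick: "\<forall>p\<in>set ps. pick p \<in> trees Sig rk \<and> p = hV Q \<delta> (pick p)"
    by metis
  define ts where "ts = map pick ps"
  have ts: "ps = map (hV Q \<delta>) ts" "\<forall>t\<in>set ts. t \<in> trees Sig rk"
    using pick by (auto simp: ts_def intro!: map_idI[symmetric])
  then have "Node f ts \<in> trees Sig rk"
    using assms by (auto simp: trees_def tuples_def)
  then show ?thesis
    using hV_in_nerode_states ts(1) by (fastforce simp: nerode_op_def)
qed

lemma nerode_states_nonempty: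
  assumes "ranked_alphabet Sig rk"
  shows "nerode_states Sig rk Q \<delta> \<noteq> {}"
proof -
  obtain f where "f \<in> Sig" "rk f = 0" using assms by (auto simp: ranked_alphabet_def)
  then have "Node f [] \<in> trees Sig rk" by (simp add: trees_def)
  then show ?thesis by (auto simp: nerode_states_def)
qed

lemma crisp_deterministic_rel_delta:
  assumes "\<And>f ps. f \<in> Sig \<Longrightarrow> ps \<in> tuples P (rk f) \<Longrightarrow> \<theta> f ps \<in> P"
  shows "crisp_deterministic Sig rk P (rel_delta \<theta>)"
  unfolding crisp_deterministic_def
proof (intro ballI)
  fix f ps assume "f \<in> Sig" "ps \<in> tuples P (rk f)"
  then show "\<exists>!p. p \<in> P \<and> rel_delta \<theta> ps f p = 1 \<and> (\<forall>p'\<in>P. p' \<noteq> p \<longrightarrow> rel_delta \<theta> ps f p' = 0)"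
    using assms by (intro ex1I[of _ "\<theta> f ps"]) (auto simp: rel_delta_def split: if_splits)
qed

lemma deterministic_run_rel_nerode:
  "deterministic_run Sig rk (nerode_states Sig rk Q \<delta>) (rel_delta (nerode_op Q \<delta>)) (hV Q \<delta>)"
  unfolding deterministic_run_def
proof (intro allI impI)
  fix f ts assume "wf_tree Sig rk (Node f ts)"
  then have "Node f ts \<in> trees Sig rk" by (simp add: trees_def)
  from hV_in_nerode_states[OF this]
  show "hV Q \<delta> (Node f ts) \<in> nerode_states Sig rk Q \<delta> \<and>
      (\<forall>q\<in>nerode_states Sig rk Q \<delta>. rel_delta (nerode_op Q \<delta>) (map (hV Q \<delta>) ts) f q
         = unit_vec (hV Q \<delta> (Node f ts)) q)"
    by (auto simp: rel_delta_def nerode_op_def unit_vec_def)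
qed

lemma i_recognizable_by_rel_nerode:
  assumes "finite (nerode_states Sig rk Q \<delta>)"
  shows "i_recognizable_by Sig rk (init_sem Q \<delta> F)
           (nerode_states Sig rk Q \<delta>) (rel_delta (nerode_op Q \<delta>)) (nerode_final Q F)"
  unfolding i_recognizable_by_def
proof
  fix t assume "t \<in> trees Sig rk"
  from init_sem_deterministic_run(2)[OF assms deterministic_run_rel_nerode this]
  have "init_sem (nerode_states Sig rk Q \<delta>) (rel_delta (nerode_op Q \<delta>)) (nerode_final Q F) t =
        nerode_final Q F (hV Q \<delta> t)" .
  then show "init_sem Q \<delta> F t =
      init_sem (nerode_states Sig rk Q \<delta>) (rel_delta (nerode_op Q \<delta>)) (nerode_final Q F) t"
    by (simp add: nerode_final_def init_sem_def)
qed

lemma finite_nerode_states_if_finite_coordinates: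
  assumes "finite Q" and coords: "\<And>q. q \<in> Q \<Longrightarrow> finite ((\<lambda>t. hV Q \<delta> t q) ` trees Sig rk)"
  shows "finite (nerode_states Sig rk Q \<delta>)"
proof (rule finite_subset)
  let ?extend = "\<lambda>v q. if q \<in> Q then v q else 0"
  show "nerode_states Sig rk Q \<delta> \<subseteq> ?extend ` (\<Pi>\<^sub>E q\<in>Q. (\<lambda>t. hV Q \<delta> t q) ` trees Sig rk)"
  proof
    fix v assume "v \<in> nerode_states Sig rk Q \<delta>"
    then obtain t where t: "t \<in> trees Sig rk" "v = hV Q \<delta> t"
      by (auto simp: nerode_states_def)
    then have "v = ?extend (restrict v Q)"
      by (auto simp: hV_outside_states)
    moreover have "restrict v Q \<in> (\<Pi>\<^sub>E q\<in>Q. (\<lambda>t. hV Q \<delta> t q) ` trees Sig rk)"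
      using t by auto
    ultimately show "v \<in> ?extend ` (\<Pi>\<^sub>E q\<in>Q. (\<lambda>t. hV Q \<delta> t q) ` trees Sig rk)" by blast
  qed
  show "finite (?extend ` (\<Pi>\<^sub>E q\<in>Q. (\<lambda>t. hV Q \<delta> t q) ` trees Sig rk))"
    using finite_PiE[OF assms(1) coords] by (rule finite_imageI)
qed

lemma finite_nerode_states_if_crisp_recognizable:
  assumes "is_wta Q"
    and crisp: "\<And>F. \<exists>(P::'p set) \<delta>' G. is_wta P \<and> crisp_deterministic Sig rk P \<delta>' \<and>
                       i_recognizable_by Sig rk (init_sem Q \<delta> F) P \<delta>' G"
  shows "finite (nerode_states Sig rk Q \<delta>)"
proof (rule finite_nerode_states_if_finite_coordinates)
  show "finite Q" using assms(1) by (simp add: is_wta_def)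
  fix q assume "q \<in> Q"
  obtain P :: "'p set" and \<delta>' G where P: "is_wta P" "crisp_deterministic Sig rk P \<delta>'"
    and recog: "i_recognizable_by Sig rk (init_sem Q \<delta> (unit_vec q)) P \<delta>' G"
    using crisp by blast
  have "(\<lambda>t. hV Q \<delta> t q) ` trees Sig rk = init_sem P \<delta>' G ` trees Sig rk"
    using recog
    by (intro image_cong)
      (auto simp: i_recognizable_by_def init_sem_unit_vec_final[OF \<open>finite Q\<close> \<open>q \<in> Q\<close>])
  also have "\<dots> \<subseteq> G ` P"
    using P by (intro init_sem_crisp_deterministic_range) (auto simp: is_wta_def)
  finally show "finite ((\<lambda>t. hV Q \<delta> t q) ` trees Sig rk)"
    using P(1) by (simp add: is_wta_def finite_subset)
qed

theorem theorem6p5: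
  fixes Sig :: "'f set" and rk :: "'f \<Rightarrow> nat"
    and Q :: "'s set"
    and \<delta> :: "'s list \<Rightarrow> 'f \<Rightarrow> 's \<Rightarrow> 'b::{comm_monoid_add,monoid_mult,mult_zero,zero_neq_one}"
    and F :: "'s \<Rightarrow> 'b"
  assumes "ranked_alphabet Sig rk"
    and "is_wta Q"
  shows "(finite (nerode_states Sig rk Q \<delta>)
          \<longleftrightarrow> (\<forall>F'::'s \<Rightarrow> 'b.
                 finite (nerode_states Sig rk Q \<delta>) \<and>
                 (\<exists>G. i_recognizable_by Sig rk (init_sem Q \<delta> F')
                        (nerode_states Sig rk Q \<delta>) (rel_delta (nerode_op Q \<delta>)) G)))
       \<and> (finite (nerode_states Sig rk Q \<delta>)
          \<longleftrightarrow> (\<forall>F'::'s \<Rightarrow> 'b.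
                 \<exists>(P::nat set) \<delta>' G. is_wta P \<and> crisp_deterministic Sig rk P \<delta>' \<and>
                   i_recognizable_by Sig rk (init_sem Q \<delta> F') P \<delta>' G))"
proof -
  let ?N = "nerode_states Sig rk Q \<delta>" and ?rel = "rel_delta (nerode_op Q \<delta>)"
  have rel_crisp: "is_wta ?N" "crisp_deterministic Sig rk ?N ?rel" if "finite ?N"
    using that nerode_states_nonempty[OF assms(1)] crisp_deterministic_rel_delta[OF nerode_op_closed]
    by (auto simp: is_wta_def)
  have ii: "\<exists>G. i_recognizable_by Sig rk (init_sem Q \<delta> F') ?N ?rel G" if "finite ?N" for F'
    using i_recognizable_by_rel_nerode[OF that] by blast
  have iii: "\<exists>(P::nat set) \<delta>' G. is_wta P \<and> crisp_deterministic Sig rk P \<delta>' \<and>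
               i_recognizable_by Sig rk (init_sem Q \<delta> F') P \<delta>' G" if "finite ?N" for F'
    using ii[OF that] crisp_deterministic_nat_states[OF rel_crisp[OF that]] by blast
  show ?thesis
    using ii iii finite_nerode_states_if_crisp_recognizable[OF assms(2)] by blast
qed

end
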